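(* Let $\mathcal{S}=(X,\xrightarrow{\Sigma},\le)$ be a WSTS with strong monotonicity whose completion $\widehat{\mathcal{S}}$ is deterministic and has strong-strict monotonicity. For every $I\in\mathrm{Idl}(X)$ and $w\in\Sigma^+$: (1) if $\{J: I\xRightarrow{w}J\}\ne\emptyset$ and $I\in\mathrm{Idl}_n(X)$ for some $n\in\mathbb{N}$, then $w(I)\in\mathrm{Idl}_n(X)$; (2) if $I\subset w(I)$ and $I\in\mathrm{Idl}_n(X)$ for some $n\in\mathbb{N}$, then $w^\infty(I)\in\mathrm{Idl}_{n+1}(X)$.
   Context: A (labeled, ordered) transition system is $\mathcal{S}=(X,\xrightarrow{\Sigma},\le)$: $X$ a set, $\Sigma$ a finite alphabet, $\xrightarrow{a}\subseteq X\times X$ for $a\in\Sigma$, $\le$ a quasi-ordering; relations extend to words ($x\xrightarrow{\varepsilon}x$, $x\xrightarrow{wa}y$ iff $x\xrightarrow{w}x'\xrightarrow{a}y$ for some $x'$). $\mathrm{Post}(x,w)=\{y:x\xrightarrow{w}y\}$, extended to sets by union; $\downarrow D=\{x:\exists y\in D,\,x\le y\}$. WSTS: $\le$ is a wqo and $x\xrightarrow{a}y$, $x'\ge x$ imply $x'\xrightarrow{w}y'$ for some $w\in\Sigma^*$ and $y'\ge y$. Strong monotonicity: $x\xrightarrow{a}y$, $x'\ge x$ imply $x'\xrightarrow{a}y'$ for some $y'\ge y$; strong-strict monotonicity: additionally $x\xrightarrow{a}y$, $x'>x$ imply $x'\xrightarrow{a}y'$ for some $y'>y$. Deterministic: at most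 one $a$-successor for each state and letter. Ideal: nonempty downward-closed directed subset of $X$; $\mathrm{Idl}(X)$ the set of ideals. For downward-closed $D$, $\mathrm{IdealDecomp}(D)$ is the finite set of $\subseteq$-maximal ideals contained in $D$. Completion: $\widehat{\mathcal{S}}=(\mathrm{Idl}(X),\Rightarrow_\Sigma,\subseteq)$ with $I\xRightarrow{a}J$ iff $J\in\mathrm{IdealDecomp}(\downarrow\mathrm{Post}(I,a))$, extended to words. When $\widehat{\mathcal{S}}$ is deterministic, $w(I)$ is the unique $J$ with $I\xRightarrow{w}J$ (when it exists). Acceleration: $w^\infty(I)=\bigcup_{k\in\mathbb{N}}w^k(I)$ if $I\subset w(I)$, else $I$. Levels: $\mathrm{Idl}_0(X)=\mathrm{Idl}(X)$; $\mathrm{Idl}_n(X)=\{\bigcup_iI_i: I_0\subset I_1\subset\cdots,\ I_i\in\mathrm{Idl}_{n-1}(X)\}$ for $n>0$. *)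

theory Defs
  imports Main
begin

text \<open>A labeled ordered transition system: states are the elements of the type 'x
(so X = UNIV), the alphabet is the finite type 's, step a x y means x goes to y
by letter a, and le is the quasi-ordering.\<close>

definition quasi_order :: "('x \<Rightarrow> 'x \<Rightarrow> bool) \<Rightarrow> bool" where
  "quasi_order le \<longleftrightarrow> (\<forall>x. le x x) \<and> (\<forall>x y z. le x y \<longrightarrow> le y z \<longrightarrow> le x z)"

definition wqo :: "('x \<Rightarrow> 'x \<Rightarrow> bool) \<Rightarrow> bool" where
  "wqo le \<longleftrightarrow> quasi_order le \<and> (\<forall>f :: nat \<Rightarrow> 'x. \<exists>i j. i < j \<and> le (f i) (f j))"

fun steps :: "('s \<Rightarrow> 'b \<Rightarrow> 'b \<Rightarrow> bool) \<Rightarrow> 's list \<Rightarrow> 'b \<Rightarrow> 'b \<Rightarrow> bool" where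
  "steps r [] x y \<longleftrightarrow> x = y"
| "steps r (a # w) x y \<longleftrightarrow> (\<exists>x'. r a x x' \<and> steps r w x' y)"

definition wsts :: "('s::finite \<Rightarrow> 'x \<Rightarrow> 'x \<Rightarrow> bool) \<Rightarrow> ('x \<Rightarrow> 'x \<Rightarrow> bool) \<Rightarrow> bool" where
  "wsts step le \<longleftrightarrow> wqo le \<and>
     (\<forall>a x y x'. step a x y \<longrightarrow> le x x' \<longrightarrow> (\<exists>w y'. steps step w x' y' \<and> le y y'))"

definition strong_mono :: "('s \<Rightarrow> 'x \<Rightarrow> 'x \<Rightarrow> bool) \<Rightarrow> ('x \<Rightarrow> 'x \<Rightarrow> bool) \<Rightarrow> bool" where
  "strong_mono step le \<longleftrightarrow>
     (\<forall>a x y x'. step a x y \<longrightarrow> le x x' \<longrightarrow> (\<exists>y'. step a x' y' \<and> le y y'))"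

definition Post :: "('s \<Rightarrow> 'x \<Rightarrow> 'x \<Rightarrow> bool) \<Rightarrow> 'x set \<Rightarrow> 's \<Rightarrow> 'x set" where
  "Post step D a = {y. \<exists>x\<in>D. step a x y}"

definition down :: "('x \<Rightarrow> 'x \<Rightarrow> bool) \<Rightarrow> 'x set \<Rightarrow> 'x set" where
  "down le D = {x. \<exists>y\<in>D. le x y}"

definition down_closed :: "('x \<Rightarrow> 'x \<Rightarrow> bool) \<Rightarrow> 'x set \<Rightarrow> bool" where
  "down_closed le D \<longleftrightarrow> (\<forall>x y. y \<in> D \<longrightarrow> le x y \<longrightarrow> x \<in> D)"

definition directed :: "('x \<Rightarrow> 'x \<Rightarrow> bool) \<Rightarrow> 'x set \<Rightarrow> bool" where
  "directed le D \<longleftrightarrow> (\<forall>x\<in>D. \<forall>y\<in>D. \<exists>z\<in>D. le x z \<and> le y z)"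

definition Idl :: "('x \<Rightarrow> 'x \<Rightarrow> bool) \<Rightarrow> 'x set set" where
  "Idl le = {I. I \<noteq> {} \<and> down_closed le I \<and> directed le I}"

definition IdealDecomp :: "('x \<Rightarrow> 'x \<Rightarrow> bool) \<Rightarrow> 'x set \<Rightarrow> 'x set set" where
  "IdealDecomp le D = {I \<in> Idl le. I \<subseteq> D \<and> (\<forall>J\<in>Idl le. J \<subseteq> D \<longrightarrow> I \<subseteq> J \<longrightarrow> J = I)}"

definition cstep :: "('s \<Rightarrow> 'x \<Rightarrow> 'x \<Rightarrow> bool) \<Rightarrow> ('x \<Rightarrow> 'x \<Rightarrow> bool) \<Rightarrow> 's \<Rightarrow> 'x set \<Rightarrow> 'x set \<Rightarrow> bool" where
  "cstep step le a I J \<longleftrightarrow> I \<in> Idl le \<and> J \<in> IdealDecomp le (down le (Post step I a))"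

definition completion_deterministic :: "('s \<Rightarrow> 'x \<Rightarrow> 'x \<Rightarrow> bool) \<Rightarrow> ('x \<Rightarrow> 'x \<Rightarrow> bool) \<Rightarrow> bool" where
  "completion_deterministic step le \<longleftrightarrow>
     (\<forall>a. \<forall>I\<in>Idl le. \<forall>J1 J2. cstep step le a I J1 \<longrightarrow> cstep step le a I J2 \<longrightarrow> J1 = J2)"

definition completion_strong_strict_mono :: "('s \<Rightarrow> 'x \<Rightarrow> 'x \<Rightarrow> bool) \<Rightarrow> ('x \<Rightarrow> 'x \<Rightarrow> bool) \<Rightarrow> bool" where
  "completion_strong_strict_mono step le \<longleftrightarrow>
     (\<forall>a. \<forall>I\<in>Idl le. \<forall>I'\<in>Idl le. \<forall>J. cstep step le a I J \<longrightarrow>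
        (I \<subseteq> I' \<longrightarrow> (\<exists>J'. cstep step le a I' J' \<and> J \<subseteq> J')) \<and>
        (I \<subset> I' \<longrightarrow> (\<exists>J'. cstep step le a I' J' \<and> J \<subset> J')))"

text \<open>w(I): the unique J with I =w=> J (meaningful when it exists).\<close>
definition wapp :: "('s \<Rightarrow> 'x \<Rightarrow> 'x \<Rightarrow> bool) \<Rightarrow> ('x \<Rightarrow> 'x \<Rightarrow> bool) \<Rightarrow> 's list \<Rightarrow> 'x set \<Rightarrow> 'x set" where
  "wapp step le w I = (THE J. steps (cstep step le) w I J)"

definition winf :: "('s \<Rightarrow> 'x \<Rightarrow> 'x \<Rightarrow> bool) \<Rightarrow> ('x \<Rightarrow> 'x \<Rightarrow> bool) \<Rightarrow> 's list \<Rightarrow> 'x set \<Rightarrow> 'x set" where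
  "winf step le w I =
     (if I \<subset> wapp step le w I then (\<Union>k. (wapp step le w ^^ k) I) else I)"

fun IdlLevel :: "('x \<Rightarrow> 'x \<Rightarrow> bool) \<Rightarrow> nat \<Rightarrow> 'x set set" where
  "IdlLevel le 0 = Idl le"
| "IdlLevel le (Suc n) =
     {(\<Union>i. f i) | f. (\<forall>i. f i \<in> IdlLevel le n) \<and> (\<forall>i. f i \<subset> f (Suc i))}"

end

theory Submission
  imports Defs
begin

text \<open>Since every element of a downward-closed set lies in a maximal ideal of it (Zorn),
  determinism of the completion forces the ideal decomposition of the downward closure of a
  post-image to be that whole set. Hence I =w=> J holds exactly when J is the nonempty iterated
  downward-closed post-image of I along w. This operator commutes with unions, so it maps the
  union of a strictly increasing chain of level-n ideals to the union of the images, which by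
  strong-strict monotonicity is again a strictly increasing chain of level-n ideals. The
  iterates of w from I with I \<subset> w(I) form such a chain too, and their union is
  w^\<infinity>(I).\<close>

lemma quasi_order_if_wsts: "wsts step le \<Longrightarrow> quasi_order le"
  by (simp add: wsts_def wqo_def)

lemma down_closed_down: "quasi_order le \<Longrightarrow> down_closed le (down le S)"
  unfolding quasi_order_def down_closed_def down_def by blast

lemma Union_chain_in_Idl:
  assumes "C \<noteq> {}" "C \<subseteq> Idl le" "\<forall>X\<in>C. \<forall>Y\<in>C. X \<subseteq> Y \<or> Y \<subseteq> X"
  shows "\<Union>C \<in> Idl le"
proof -
  have "directed le (\<Union>C)"
    unfolding directed_def
  proof (intro ballI)
    fix x y assume "x \<in> \<Union>C" "y \<in> \<Union>C"
    then obtain X Y where XY: "X \<in> C" "Y \<in> C" "x \<in> X" "y \<in> Y" by auto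
    with assms(3) have "x \<in> X \<and> y \<in> X \<or> x \<in> Y \<and> y \<in> Y" by blast
    with XY assms(2) show "\<exists>z\<in>\<Union>C. le x z \<and> le y z"
      unfolding Idl_def directed_def by blast
  qed
  moreover have "down_closed le (\<Union>C)"
    using assms(2) unfolding Idl_def down_closed_def by blast
  ultimately show ?thesis using assms(1,2) by (auto simp: Idl_def)
qed

lemma IdealDecomp_covers:
  assumes qo: "quasi_order le" and dc: "down_closed le D" and x: "x \<in> D"
  shows "\<exists>J\<in>IdealDecomp le D. x \<in> J"
proof -
  define A where "A = {J \<in> Idl le. x \<in> J \<and> J \<subseteq> D}"
  have "down le {x} \<in> A"
    using qo dc x unfolding A_def Idl_def down_def down_closed_def directed_def quasi_order_def
    by blast
  then have "A \<noteq> {}" by blast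
  then have "\<exists>M\<in>A. \<forall>X\<in>A. M \<subseteq> X \<longrightarrow> X = M"
  proof (rule subset_Zorn_nonempty)
    fix C assume C: "C \<noteq> {}" "subset.chain A C"
    then have "C \<subseteq> A" "\<forall>X\<in>C. \<forall>Y\<in>C. X \<subseteq> Y \<or> Y \<subseteq> X"
      by (auto simp: subset.chain_def)
    moreover from this have "\<Union>C \<in> Idl le"
      using Union_chain_in_Idl[of C le] C(1) unfolding A_def by blast
    ultimately show "\<Union>C \<in> A" using C(1) unfolding A_def by blast
  qed
  then obtain M where M: "M \<in> A" "\<forall>X\<in>A. M \<subseteq> X \<longrightarrow> X = M" by blast
  then have "M \<in> IdealDecomp le D" unfolding IdealDecomp_def A_def by blast
  with M(1) show ?thesis unfolding A_def by blast
qed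

lemma cstep_Idl: "cstep step le a I J \<Longrightarrow> J \<in> Idl le"
  by (simp add: cstep_def IdealDecomp_def)

lemma cstep_iff_down_Post:
  assumes qo: "quasi_order le" and det: "completion_deterministic step le"
    and I: "I \<in> Idl le"
  shows "cstep step le a I J \<longleftrightarrow> J = down le (Post step I a) \<and> J \<noteq> {}"
proof -
  let ?D = "down le (Post step I a)"
  have covers: "\<exists>J'. cstep step le a I J' \<and> x \<in> J'" if "x \<in> ?D" for x
    using IdealDecomp_covers[OF qo down_closed_down[OF qo] that] I by (auto simp: cstep_def)
  have "J = ?D \<and> J \<noteq> {}" if J: "cstep step le a I J" for J
  proof -
    have "J \<subseteq> ?D" "J \<noteq> {}" using J by (auto simp: cstep_def IdealDecomp_def Idl_def)
    moreover have "?D \<subseteq> J"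
      using covers det J I unfolding completion_deterministic_def by blast
    ultimately show ?thesis by blast
  qed
  moreover have "cstep step le a I ?D" if "?D \<noteq> {}"
    using that covers calculation by blast
  ultimately show ?thesis by blast
qed

fun down_Post_word ::
  "('s \<Rightarrow> 'x \<Rightarrow> 'x \<Rightarrow> bool) \<Rightarrow> ('x \<Rightarrow> 'x \<Rightarrow> bool) \<Rightarrow> 's list \<Rightarrow> 'x set \<Rightarrow> 'x set"
where
  "down_Post_word step le [] I = I"
| "down_Post_word step le (a # w) I = down_Post_word step le w (down le (Post step I a))"

lemma down_Post_word_empty: "down_Post_word step le w {} = {}"
  by (induction w) (auto simp: Post_def down_def)

lemma down_Post_word_mono:
  "I \<subseteq> I' \<Longrightarrow> down_Post_word step le w I \<subseteq> down_Post_word step le w I'"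
proof (induction w arbitrary: I I')
  case (Cons a w)
  have "down le (Post step I a) \<subseteq> down le (Post step I' a)"
    using Cons.prems by (auto simp: Post_def down_def)
  then show ?case using Cons.IH by simp
qed simp

lemma down_Post_word_Union:
  "down_Post_word step le w (\<Union>S) = (\<Union>I\<in>S. down_Post_word step le w I)"
proof (induction w arbitrary: S)
  case (Cons a w)
  have "down le (Post step (\<Union>S) a) = (\<Union>I\<in>S. down le (Post step I a))"
    by (auto simp: Post_def down_def)
  then show ?case using Cons.IH by (simp add: image_image)
qed simp

lemma steps_cstep_iff:
  assumes qo: "quasi_order le" and det: "completion_deterministic step le"
  shows "I \<in> Idl le \<Longrightarrow>
    steps (cstep step le) w I J \<longleftrightarrow> J = down_Post_word step le w I \<and> J \<noteq> {}"
proof (induction w arbitrary: I)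
  case Nil
  then show ?case by (auto simp: Idl_def)
next
  case (Cons a w)
  let ?D = "down le (Post step I a)"
  have D: "cstep step le a I K \<longleftrightarrow> K = ?D \<and> ?D \<noteq> {}" for K
    using cstep_iff_down_Post[OF qo det Cons.prems] by blast
  have D_Idl: "?D \<noteq> {} \<Longrightarrow> ?D \<in> Idl le"
    using D[of ?D] cstep_Idl[of step le a I ?D] by simp
  have "steps (cstep step le) (a # w) I J \<longleftrightarrow> ?D \<noteq> {} \<and> steps (cstep step le) w ?D J"
    by (simp add: D)
  also have "\<dots> \<longleftrightarrow> ?D \<noteq> {} \<and> J = down_Post_word step le w ?D \<and> J \<noteq> {}"
    using D_Idl Cons.IH by blast
  also have "\<dots> \<longleftrightarrow> J = down_Post_word step le (a # w) I \<and> J \<noteq> {}"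
    by (metis down_Post_word.simps(2) down_Post_word_empty)
  finally show ?case .
qed

lemma steps_cstep_Idl: "I \<in> Idl le \<Longrightarrow> steps (cstep step le) w I J \<Longrightarrow> J \<in> Idl le"
  by (induction w arbitrary: I) (auto dest: cstep_Idl)

lemma completion_strong_strict_monoD:
  assumes "completion_strong_strict_mono step le" "I \<in> Idl le" "I' \<in> Idl le" "I \<subset> I'"
    and "cstep step le a I J"
  shows "\<exists>J'. cstep step le a I' J' \<and> J \<subset> J'"
  using assms(1)[unfolded completion_strong_strict_mono_def, rule_format, OF assms(2,3,5)] assms(4)
  by blast

lemma steps_cstep_strict_mono:
  assumes ssm: "completion_strong_strict_mono step le"
  shows "I \<in> Idl le \<Longrightarrow> I' \<in> Idl le \<Longrightarrow> I \<subset> I' \<Longrightarrow> steps (cstep step le) w I J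
    \<Longrightarrow> \<exists>J'. steps (cstep step le) w I' J' \<and> J \<subset> J'"
proof (induction w arbitrary: I I')
  case Nil
  then show ?case by simp
next
  case (Cons a w)
  from Cons.prems(4) obtain K where K: "cstep step le a I K" "steps (cstep step le) w K J"
    by auto
  with completion_strong_strict_monoD[OF ssm Cons.prems(1-3)] obtain K'
    where K': "cstep step le a I' K'" "K \<subset> K'" by blast
  from Cons.IH[OF cstep_Idl[OF K(1)] cstep_Idl[OF K'(1)] K'(2) K(2)] obtain J'
    where "steps (cstep step le) w K' J'" "J \<subset> J'" by blast
  with K'(1) show ?case by auto
qed

lemma down_Post_word_strict_mono:
  assumes qo: "quasi_order le" and det: "completion_deterministic step le"
    and ssm: "completion_strong_strict_mono step le"
    and I: "I \<in> Idl le" and I': "I' \<in> Idl le" and "I \<subset> I'"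
    and ne: "down_Post_word step le w I \<noteq> {}"
  shows "down_Post_word step le w I \<subset> down_Post_word step le w I'"
proof -
  have "steps (cstep step le) w I (down_Post_word step le w I)"
    using steps_cstep_iff[OF qo det I] ne by blast
  with steps_cstep_strict_mono[OF ssm I I' \<open>I \<subset> I'\<close>] obtain J'
    where "steps (cstep step le) w I' J'" "down_Post_word step le w I \<subset> J'" by blast
  with steps_cstep_iff[OF qo det I'] show ?thesis by blast
qed

lemma wapp_eq_down_Post_word:
  assumes qo: "quasi_order le" and det: "completion_deterministic step le"
    and I: "I \<in> Idl le" and ne: "down_Post_word step le w I \<noteq> {}"
  shows "wapp step le w I = down_Post_word step le w I"
  unfolding wapp_def using steps_cstep_iff[OF qo det I] ne by (intro the_equality) auto

lemma IdlLevel_Suc_iff: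
  "X \<in> IdlLevel le (Suc n) \<longleftrightarrow>
     (\<exists>f :: nat \<Rightarrow> _. X = (\<Union>i. f i) \<and> (\<forall>i. f i \<in> IdlLevel le n) \<and> strict_mono f)"
  by (simp add: strict_mono_Suc_iff)

lemma IdlLevel_subset_Idl: "IdlLevel le n \<subseteq> Idl le"
proof (induction n)
  case (Suc n)
  show ?case
  proof
    fix X assume "X \<in> IdlLevel le (Suc n)"
    then obtain f :: "nat \<Rightarrow> _"
      where X: "X = (\<Union>i. f i)" and f: "\<forall>i. f i \<in> IdlLevel le n" "strict_mono f"
      by (subst (asm) IdlLevel_Suc_iff) blast
    have "f i \<subseteq> f j \<or> f j \<subseteq> f i" for i j
      using monoD[OF strict_mono_mono[OF f(2)]] by (metis nle_le)
    with f(1) Suc.IH Union_chain_in_Idl[of "range f" le] show "X \<in> Idl le"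
      unfolding X by blast
  qed
qed simp

lemma Union_shift_mono:
  fixes f :: "nat \<Rightarrow> 'a set"
  assumes "mono f"
  shows "(\<Union>i. f (i + k)) = (\<Union>i. f i)"
  using monoD[OF assms, of i "i + k" for i] by fastforce

lemma down_Post_word_IdlLevel:
  assumes qo: "quasi_order le" and det: "completion_deterministic step le"
    and ssm: "completion_strong_strict_mono step le"
  shows "I \<in> IdlLevel le n \<Longrightarrow> down_Post_word step le w I \<noteq> {}
    \<Longrightarrow> down_Post_word step le w I \<in> IdlLevel le n"
proof (induction n arbitrary: I)
  case 0
  then have I: "I \<in> Idl le" by simp
  with 0 have "steps (cstep step le) w I (down_Post_word step le w I)"
    using steps_cstep_iff[OF qo det I] by blast
  then show ?case using steps_cstep_Idl[OF I] by simp
next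
  case (Suc n)
  let ?P = "down_Post_word step le w"
  from Suc.prems(1) obtain f :: "nat \<Rightarrow> _" where I: "I = (\<Union>i. f i)"
    and f: "\<forall>i. f i \<in> IdlLevel le n" "strict_mono f"
    by (subst (asm) IdlLevel_Suc_iff) blast
  have f_Idl: "f i \<in> Idl le" for i using f(1) IdlLevel_subset_Idl by blast
  have PI: "?P I = (\<Union>i. ?P (f i))"
    unfolding I using down_Post_word_Union[of step le w "range f"] by simp
  with Suc.prems(2) obtain i0 where "?P (f i0) \<noteq> {}" by auto
  \<comment> \<open>images before index i0 may be empty, so the chain is restarted there\<close>
  moreover have mono_P: "mono (\<lambda>i. ?P (f i))"
    by (intro monoI down_Post_word_mono monoD[OF strict_mono_mono[OF f(2)]])
  ultimately have ne: "?P (f (i + i0)) \<noteq> {}" for i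
    by (metis le_add2 monoD subset_empty)
  have "?P I = (\<Union>i. ?P (f (i + i0)))"
    unfolding PI using Union_shift_mono[OF mono_P] by simp
  moreover have "strict_mono (\<lambda>i. ?P (f (i + i0)))"
    using down_Post_word_strict_mono[OF qo det ssm f_Idl f_Idl] f(2) ne
    by (simp add: strict_mono_Suc_iff)
  moreover have "?P (f (i + i0)) \<in> IdlLevel le n" for i
    using Suc.IH f(1) ne by blast
  ultimately show ?case unfolding IdlLevel_Suc_iff by blast
qed

lemma wapp_iterates_strict_chain:
  assumes qo: "quasi_order le" and det: "completion_deterministic step le"
    and ssm: "completion_strong_strict_mono step le"
    and I: "I \<in> IdlLevel le n" and grows: "I \<subset> down_Post_word step le w I"
  shows "strict_mono (\<lambda>k. (wapp step le w ^^ k) I)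
    \<and> (\<forall>k. (wapp step le w ^^ k) I \<in> IdlLevel le n)"
proof -
  let ?P = "down_Post_word step le w" and ?h = "\<lambda>k. (wapp step le w ^^ k) I"
  have lvl: "X \<in> IdlLevel le n \<Longrightarrow> X \<in> Idl le" for X using IdlLevel_subset_Idl by blast
  have "?h k \<in> IdlLevel le n \<and> ?h k \<subset> ?P (?h k) \<and> ?h (Suc k) = ?P (?h k)" for k
  proof (induction k)
    case 0
    show ?case using I grows wapp_eq_down_Post_word[OF qo det lvl[OF I]] by auto
  next
    case (Suc k)
    then have ne: "?P (?h k) \<noteq> {}" and lvl_Suc: "?h (Suc k) \<in> IdlLevel le n"
      using down_Post_word_IdlLevel[OF qo det ssm] by auto
    have "?h (Suc k) \<subset> ?P (?h (Suc k))"
      using Suc down_Post_word_strict_mono[OF qo det ssm lvl lvl] lvl_Suc ne by simp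
    moreover have "?h (Suc (Suc k)) = ?P (?h (Suc k))"
      using wapp_eq_down_Post_word[OF qo det lvl[OF lvl_Suc]] calculation by auto
    ultimately show ?case using lvl_Suc by blast
  qed
  then show ?thesis by (simp add: strict_mono_Suc_iff)
qed

theorem proposition6:
  fixes step :: "'s::finite \<Rightarrow> 'x \<Rightarrow> 'x \<Rightarrow> bool"
    and le :: "'x \<Rightarrow> 'x \<Rightarrow> bool"
  assumes "wsts step le"
    and "strong_mono step le"
    and "completion_deterministic step le"
    and "completion_strong_strict_mono step le"
  shows "\<forall>I\<in>Idl le. \<forall>w. w \<noteq> [] \<longrightarrow>
           (\<forall>n. (\<exists>J. steps (cstep step le) w I J) \<and> I \<in> IdlLevel le n
                  \<longrightarrow> wapp step le w I \<in> IdlLevel le n) \<and>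
           (\<forall>n. (\<exists>J. steps (cstep step le) w I J) \<and> I \<subset> wapp step le w I \<and> I \<in> IdlLevel le n
                  \<longrightarrow> winf step le w I \<in> IdlLevel le (Suc n))"
proof (intro ballI allI impI conjI)
  have qo: "quasi_order le" using assms(1) by (rule quasi_order_if_wsts)
  note det = assms(3) and ssm = assms(4)
  fix I n and w :: "'s list"
  assume I: "I \<in> Idl le"
  let ?P = "down_Post_word step le w"
  have reachable_iff: "(\<exists>J. steps (cstep step le) w I J) \<longleftrightarrow> ?P I \<noteq> {}"
    using steps_cstep_iff[OF qo det I] by auto
  note wapp_eq = wapp_eq_down_Post_word[OF qo det I]
  show "wapp step le w I \<in> IdlLevel le n"
    if "(\<exists>J. steps (cstep step le) w I J) \<and> I \<in> IdlLevel le n"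
    using that reachable_iff wapp_eq down_Post_word_IdlLevel[OF qo det ssm] by simp
  show "winf step le w I \<in> IdlLevel le (Suc n)"
    if "(\<exists>J. steps (cstep step le) w I J) \<and> I \<subset> wapp step le w I \<and> I \<in> IdlLevel le n"
  proof -
    from that have grows: "I \<subset> ?P I" and I_lvl: "I \<in> IdlLevel le n"
      using reachable_iff wapp_eq by auto
    have "winf step le w I = (\<Union>k. (wapp step le w ^^ k) I)"
      using that by (simp add: winf_def)
    with wapp_iterates_strict_chain[OF qo det ssm I_lvl grows] show ?thesis
      unfolding IdlLevel_Suc_iff by blast
  qed
qed

end
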